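(* Let $A$ be a metabelian Lie algebra over a field $k$ and let $J$ be either $A^2$ or $\mathrm{Fit}(A)$ (the latter in case $\mathrm{Fit}(A)$ is abelian). Let $\{a_\alpha:\alpha\in\Lambda\}\subseteq A$ be a family whose images form a basis of $A/J$, let $R=k[x_\alpha:\alpha\in\Lambda]$ with $J$ regarded as an $R$-module, and let $\{b_\beta:\beta\in B\}$ be a generating set of the $R$-module $J$. Let $f\in R$ have zero constant term, written as $f=x_{j_1}f_1+\dots+x_{j_q}f_q$ with $j_1,\dots,j_q\in\Lambda$, $f_1,\dots,f_q\in R$. Then there is a Lie algebra homomorphism $\varphi:A\to A$ with $\varphi(b_\beta)=b_\beta\cdot(1+f)$ for all $\beta\in B$ and $\varphi(a_\alpha)=a_\alpha+h_\alpha$ for all $\alpha\in\Lambda$, where $h_\alpha=(a_\alpha\circ a_{j_1})\cdot f_1+\dots+(a_\alpha\circ a_{j_q})\cdot f_q\in A^2$. Moreover, if $J$ is a torsion-free $R$-module, then $\varphi$ is injective.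
   Context: A Lie algebra is metabelian if $(a\circ b)\circ(c\circ d)=0$ identically; $A^2$ is the ideal spanned by all products $a\circ b$; $\mathrm{Fit}(A)$ is the ideal generated by all elements lying in nilpotent ideals. For an abelian ideal $J\supseteq A^2$ and a family $\{a_\alpha\}$ as in the claim, $J$ is an $R$-module via $b\cdot x_\alpha=b\circ a_\alpha$ ($b\in J$), extended multiplicatively and $k$-linearly (this is well defined). The family $\{a_\alpha\}\cup\{b_\beta\}$ generates $A$ as a Lie algebra. *)

theory Defs
  imports Complex_Main "HOL-Library.Poly_Mapping"
begin

text \<open>A Lie algebra over a field 'k: the carrier is the whole type 'v, a vector space
  via the scalar multiplication sc, with Lie bracket br.\<close>

definition lie_algebra :: "('k::field \<Rightarrow> 'v::ab_group_add \<Rightarrow> 'v) \<Rightarrow> ('v \<Rightarrow> 'v \<Rightarrow> 'v) \<Rightarrow> bool" where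
  "lie_algebra sc br \<longleftrightarrow> vector_space sc
     \<and> (\<forall>x y z. br (x + y) z = br x z + br y z)
     \<and> (\<forall>x y z. br x (y + z) = br x y + br x z)
     \<and> (\<forall>c x y. br (sc c x) y = sc c (br x y))
     \<and> (\<forall>c x y. br x (sc c y) = sc c (br x y))
     \<and> (\<forall>x. br x x = 0)
     \<and> (\<forall>x y z. br x (br y z) + br y (br z x) + br z (br x y) = 0)"

definition metabelian :: "('v \<Rightarrow> 'v \<Rightarrow> 'v::zero) \<Rightarrow> bool" where
  "metabelian br \<longleftrightarrow> (\<forall>a b c d. br (br a b) (br c d) = 0)"

definition lie_ideal :: "('k::field \<Rightarrow> 'v::ab_group_add \<Rightarrow> 'v) \<Rightarrow> ('v \<Rightarrow> 'v \<Rightarrow> 'v) \<Rightarrow> 'v set \<Rightarrow> bool" where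
  "lie_ideal sc br I \<longleftrightarrow> module.subspace sc I \<and> (\<forall>x i. i \<in> I \<longrightarrow> br x i \<in> I)"

definition derived :: "('k::field \<Rightarrow> 'v::ab_group_add \<Rightarrow> 'v) \<Rightarrow> ('v \<Rightarrow> 'v \<Rightarrow> 'v) \<Rightarrow> 'v set" where
  "derived sc br = module.span sc {br x y | x y. True}"

fun lcs :: "('k::field \<Rightarrow> 'v::ab_group_add \<Rightarrow> 'v) \<Rightarrow> ('v \<Rightarrow> 'v \<Rightarrow> 'v) \<Rightarrow> 'v set \<Rightarrow> nat \<Rightarrow> 'v set" where
  "lcs sc br I 0 = I"
| "lcs sc br I (Suc n) = module.span sc {br x y | x y. x \<in> I \<and> y \<in> lcs sc br I n}"

definition nilpotent_ideal :: "('k::field \<Rightarrow> 'v::ab_group_add \<Rightarrow> 'v) \<Rightarrow> ('v \<Rightarrow> 'v \<Rightarrow> 'v) \<Rightarrow> 'v set \<Rightarrow> bool" where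
  "nilpotent_ideal sc br I \<longleftrightarrow> lie_ideal sc br I \<and> (\<exists>n. lcs sc br I n = {0})"

definition fitting :: "('k::field \<Rightarrow> 'v::ab_group_add \<Rightarrow> 'v) \<Rightarrow> ('v \<Rightarrow> 'v \<Rightarrow> 'v) \<Rightarrow> 'v set" where
  "fitting sc br = \<Inter> {I. lie_ideal sc br I \<and> \<Union> {N. nilpotent_ideal sc br N} \<subseteq> I}"

definition abelian_set :: "('v \<Rightarrow> 'v \<Rightarrow> 'v::zero) \<Rightarrow> 'v set \<Rightarrow> bool" where
  "abelian_set br J \<longleftrightarrow> (\<forall>x\<in>J. \<forall>y\<in>J. br x y = 0)"

text \<open>The images of the family a form a basis of A/J.\<close>
definition basis_mod :: "('k::field \<Rightarrow> 'v::ab_group_add \<Rightarrow> 'v) \<Rightarrow> 'v set \<Rightarrow> ('l \<Rightarrow> 'v) \<Rightarrow> bool" where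
  "basis_mod sc J a \<longleftrightarrow>
     (\<forall>F c. finite F \<longrightarrow> (\<Sum>\<alpha>\<in>F. sc (c \<alpha>) (a \<alpha>)) \<in> J \<longrightarrow> (\<forall>\<alpha>\<in>F. c \<alpha> = 0))
   \<and> (\<forall>v. \<exists>F c. finite F \<and> v - (\<Sum>\<alpha>\<in>F. sc (c \<alpha>) (a \<alpha>)) \<in> J)"

text \<open>R = k[x_alpha]: polynomials as finitely supported maps from monomials (exponent
  vectors) to coefficients. The variable x_alpha: \<close>
definition pvar :: "'l \<Rightarrow> ('l \<Rightarrow>\<^sub>0 nat) \<Rightarrow>\<^sub>0 'k::comm_ring_1" where
  "pvar \<alpha> = Poly_Mapping.single (Poly_Mapping.single \<alpha> 1) 1"

text \<open>Action of a monomial x^m on b: apply (- \<circ> a_alpha) m(alpha) times for each alpha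
  (these operators commute on J, so the order is irrelevant there).\<close>
definition mono_act :: "('v \<Rightarrow> 'v \<Rightarrow> 'v) \<Rightarrow> ('l \<Rightarrow> 'v) \<Rightarrow> ('l \<Rightarrow>\<^sub>0 nat) \<Rightarrow> 'v \<Rightarrow> 'v" where
  "mono_act br a m b = Finite_Set.fold (\<lambda>\<alpha> v. ((\<lambda>w. br w (a \<alpha>)) ^^ Poly_Mapping.lookup m \<alpha>) v) b (Poly_Mapping.keys m)"

definition poly_act :: "('k::comm_ring_1 \<Rightarrow> 'v::ab_group_add \<Rightarrow> 'v) \<Rightarrow> ('v \<Rightarrow> 'v \<Rightarrow> 'v) \<Rightarrow> ('l \<Rightarrow> 'v)
    \<Rightarrow> 'v \<Rightarrow> (('l \<Rightarrow>\<^sub>0 nat) \<Rightarrow>\<^sub>0 'k) \<Rightarrow> 'v" where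
  "poly_act sc br a b p = (\<Sum>m\<in>Poly_Mapping.keys p. sc (Poly_Mapping.lookup p m) (mono_act br a m b))"

definition generates_module :: "('k::field \<Rightarrow> 'v::ab_group_add \<Rightarrow> 'v) \<Rightarrow> ('v \<Rightarrow> 'v \<Rightarrow> 'v) \<Rightarrow> ('l \<Rightarrow> 'v)
    \<Rightarrow> 'v set \<Rightarrow> ('b \<Rightarrow> 'v) \<Rightarrow> bool" where
  "generates_module sc br a J g \<longleftrightarrow> range g \<subseteq> J \<and>
     (\<forall>v\<in>J. \<exists>F r. finite F \<and> v = (\<Sum>\<beta>\<in>F. poly_act sc br a (g \<beta>) (r \<beta>)))"

definition torsion_free :: "('k::field \<Rightarrow> 'v::ab_group_add \<Rightarrow> 'v) \<Rightarrow> ('v \<Rightarrow> 'v \<Rightarrow> 'v) \<Rightarrow> ('l \<Rightarrow> 'v)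
    \<Rightarrow> 'v set \<Rightarrow> bool" where
  "torsion_free sc br a J \<longleftrightarrow> (\<forall>v\<in>J. \<forall>p. p \<noteq> 0 \<longrightarrow> poly_act sc br a v p = 0 \<longrightarrow> v = 0)"

definition lie_hom :: "('k::field \<Rightarrow> 'v::ab_group_add \<Rightarrow> 'v) \<Rightarrow> ('v \<Rightarrow> 'v \<Rightarrow> 'v) \<Rightarrow> ('v \<Rightarrow> 'v) \<Rightarrow> bool" where
  "lie_hom sc br \<phi> \<longleftrightarrow> Vector_Spaces.linear sc sc \<phi> \<and> (\<forall>x y. \<phi> (br x y) = br (\<phi> x) (\<phi> y))"

end

theory Submission imports Defs begin

text \<open>
  J is a module over R = k[x_\<alpha>] because the operators b \<mapsto> [b, a_\<alpha>] commute on J: their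
  commutator is ad [a_\<alpha>, a_\<beta>], and [a_\<alpha>, a_\<beta>] lies in the abelian ideal J. Since the a_\<alpha> form
  a basis modulo J, a linear map on A is given freely by its values on the a_\<alpha> and its restriction
  to J; take a_\<alpha> \<mapsto> a_\<alpha> + h_\<alpha> and u \<mapsto> u \<cdot> (1 + f) on J. It preserves brackets as soon as it does
  so on pairs of generators. For two elements of J both sides vanish; for u \<in> J and a_\<gamma> this is
  the R-linearity of multiplication by 1 + f; for a_\<alpha> and a_\<gamma> the Jacobi identity turns
  [a_\<alpha>, a_\<gamma>] \<cdot> x_j into [a_\<alpha>, a_j] \<cdot> x_\<gamma> - [a_\<gamma>, a_j] \<cdot> x_\<alpha>, which is what the h_\<alpha> are designed
  to absorb. If J is torsion free, multiplication by 1 + f \<noteq> 0 is injective on J, and as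
  \<phi>(a_\<alpha>) \<equiv> a_\<alpha> modulo J, \<phi> is injective.
\<close>

lemma poly_mapping_sum_single:
  "(\<Sum>m\<in>Poly_Mapping.keys p. Poly_Mapping.single m (Poly_Mapping.lookup p m)) = p"
  by (rule poly_mapping_eqI) (simp add: lookup_sum lookup_single when_def in_keys_iff)

locale lie_alg =
  fixes sc :: "'k::field \<Rightarrow> 'v::ab_group_add \<Rightarrow> 'v" and br :: "'v \<Rightarrow> 'v \<Rightarrow> 'v"
  assumes lie: "lie_algebra sc br"
begin

sublocale vector_space sc
  using lie by (simp add: lie_algebra_def)

lemma bracket_add_left: "br (x + y) z = br x z + br y z"
  and bracket_add_right: "br x (y + z) = br x y + br x z"
  and bracket_scale_left: "br (sc c x) y = sc c (br x y)"
  and bracket_scale_right: "br x (sc c y) = sc c (br x y)"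
  and bracket_self: "br x x = 0"
  and jacobi: "br x (br y z) + br y (br z x) + br z (br x y) = 0"
  using lie by (simp_all add: lie_algebra_def)

lemma bracket_zero_left [simp]: "br 0 y = 0"
  using bracket_add_left[of 0 0 y] by simp

lemma bracket_zero_right [simp]: "br x 0 = 0"
  using bracket_add_right[of x 0 0] by simp

lemma bracket_neg_left: "br (- x) y = - br x y"
  using bracket_add_left[of x "- x" y] by (simp add: eq_neg_iff_add_eq_0 add.commute)

lemma bracket_anticomm: "br x y = - br y x"
proof -
  have "br (x + y) (x + y) = br x x + br y x + (br x y + br y y)"
    by (simp only: bracket_add_left bracket_add_right)
  then have "br x y + br y x = 0"
    by (simp add: bracket_self add.commute)
  then show ?thesis
    by (simp add: eq_neg_iff_add_eq_0)
qed

lemma bracket_derivation: "br (br x y) z = br (br x z) y - br (br y z) x"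
proof -
  have "br y (br z x) = br (br x z) y"
    by (metis bracket_anticomm bracket_neg_left minus_minus)
  then have "- br (br y z) x + br (br x z) y + - br (br x y) z = 0"
    using jacobi[of x y z] bracket_anticomm[of x "br y z"] bracket_anticomm[of z "br x y"]
    by (simp only:)
  then show ?thesis
    by (simp add: algebra_simps)
qed

lemma bracket_in_derived: "br x y \<in> derived sc br"
  unfolding derived_def by (rule span_base) blast

lemma subspace_derived: "subspace (derived sc br)"
  by (simp add: derived_def)

lemma subspace_fitting: "subspace (fitting sc br)"
  unfolding fitting_def lie_ideal_def by (rule subspace_Inter) blast

lemma derived_abelian:
  assumes "metabelian br"
  shows "abelian_set br (derived sc br)"
proof -
  have bracket_generator: "br u (br x y) = 0" if "u \<in> derived sc br" for u x y
    using that unfolding derived_def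
  proof (induct rule: span_induct_alt)
    case (step c v w)
    then show ?case
      using assms by (auto simp: metabelian_def bracket_add_left bracket_scale_left)
  qed simp
  have "br u w = 0" if "u \<in> derived sc br" "w \<in> derived sc br" for u w
    using that(2) unfolding derived_def
  proof (induct rule: span_induct_alt)
    case (step c v w)
    then show ?case
      using bracket_generator[OF that(1)] by (auto simp: bracket_add_right bracket_scale_right)
  qed simp
  then show ?thesis
    unfolding abelian_set_def by blast
qed

lemma derived_subset_fitting:
  assumes "metabelian br"
  shows "derived sc br \<subseteq> fitting sc br"
proof -
  have "lcs sc br (derived sc br) (Suc 0) \<subseteq> {0}"
    using derived_abelian[OF assms] unfolding lcs.simps
    by (intro span_minimal subspace_single_0) (auto simp: abelian_set_def)
  then have "lcs sc br (derived sc br) (Suc 0) = {0}"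
    using span_zero by auto
  then have "nilpotent_ideal sc br (derived sc br)"
    unfolding nilpotent_ideal_def lie_ideal_def
    using subspace_derived bracket_in_derived by blast
  then show ?thesis
    unfolding fitting_def by blast
qed

end

locale abelian_ideal_over_derived = lie_alg sc br
  for sc :: "'k::field \<Rightarrow> 'v::ab_group_add \<Rightarrow> 'v" and br +
  fixes J :: "'v set" and a :: "'l \<Rightarrow> 'v"
  assumes subspace_J: "subspace J"
    and bracket_in_J: "br x y \<in> J"
    and J_abelian: "x \<in> J \<Longrightarrow> y \<in> J \<Longrightarrow> br x y = 0"
begin

definition var_act :: "'l \<Rightarrow> 'v \<Rightarrow> 'v" where
  "var_act \<alpha> w = br w (a \<alpha>)"

lemma var_act_add: "var_act \<alpha> (x + y) = var_act \<alpha> x + var_act \<alpha> y"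
  by (simp add: var_act_def bracket_add_left)

lemma var_act_scale: "var_act \<alpha> (sc c x) = sc c (var_act \<alpha> x)"
  by (simp add: var_act_def bracket_scale_left)

lemma var_act_zero [simp]: "var_act \<alpha> 0 = 0"
  by (simp add: var_act_def)

lemma var_act_in_J: "var_act \<alpha> w \<in> J"
  by (simp add: var_act_def bracket_in_J)

lemma var_act_sum: "var_act \<alpha> (sum g S) = (\<Sum>s\<in>S. var_act \<alpha> (g s))"
  by (induct S rule: infinite_finite_induct) (auto simp: var_act_add)

text \<open>The variables act commutingly on J because [a_\<beta>, a_\<alpha>] lies in the abelian ideal J.\<close>
lemma var_act_commute:
  assumes "w \<in> J"
  shows "var_act \<alpha> (var_act \<beta> w) = var_act \<beta> (var_act \<alpha> w)"
  using bracket_derivation[of w "a \<beta>" "a \<alpha>"] J_abelian[OF bracket_in_J assms]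
  by (simp add: var_act_def)

lemma var_act_pow_in_J: "w \<in> J \<Longrightarrow> (var_act \<alpha> ^^ n) w \<in> J"
  by (induct n) (auto simp: var_act_in_J)

lemma var_act_pow_add: "(var_act \<alpha> ^^ n) (x + y) = (var_act \<alpha> ^^ n) x + (var_act \<alpha> ^^ n) y"
  by (induct n) (auto simp: var_act_add)

lemma var_act_pow_scale: "(var_act \<alpha> ^^ n) (sc c x) = sc c ((var_act \<alpha> ^^ n) x)"
  by (induct n) (auto simp: var_act_scale)

lemma var_act_pow_commute:
  "w \<in> J \<Longrightarrow> var_act \<beta> ((var_act \<alpha> ^^ n) w) = (var_act \<alpha> ^^ n) (var_act \<beta> w)"
  by (induct n) (auto simp: var_act_commute var_act_pow_in_J)

lemma var_act_pows_commute:
  "w \<in> J \<Longrightarrow> (var_act \<beta> ^^ k) ((var_act \<alpha> ^^ n) w) = (var_act \<alpha> ^^ n) ((var_act \<beta> ^^ k) w)"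
  by (induct k) (auto simp: var_act_pow_commute var_act_pow_in_J)

text \<open>The steps of the fold defining mono_act, made the identity outside J so that they commute
  everywhere, as Finite_Set.fold requires.\<close>
definition mono_step :: "('l \<Rightarrow>\<^sub>0 nat) \<Rightarrow> 'l \<Rightarrow> 'v \<Rightarrow> 'v" where
  "mono_step m \<alpha> v = (if v \<in> J then (var_act \<alpha> ^^ Poly_Mapping.lookup m \<alpha>) v else v)"

lemma comp_fun_commute_on_mono_step: "comp_fun_commute_on UNIV (mono_step m)"
  by unfold_locales (auto simp: mono_step_def fun_eq_iff var_act_pow_in_J var_act_pows_commute)

lemma fold_mono_step_insert:
  "finite A \<Longrightarrow> \<alpha> \<notin> A \<Longrightarrow>
    Finite_Set.fold (mono_step m) w (insert \<alpha> A) = mono_step m \<alpha> (Finite_Set.fold (mono_step m) w A)"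
  by (rule comp_fun_commute_on.fold_insert[OF comp_fun_commute_on_mono_step]) auto

lemma mono_step_in_J: "v \<in> J \<Longrightarrow> mono_step m \<alpha> v \<in> J"
  by (simp add: mono_step_def var_act_pow_in_J)

lemma mono_act_eq_fold:
  "w \<in> J \<Longrightarrow> mono_act br a m w = Finite_Set.fold (mono_step m) w (Poly_Mapping.keys m)"
  unfolding mono_act_def
proof (rule fold_closed_eq[where B = J])
  show "mono_step m \<alpha> v \<in> J" if "v \<in> J" for \<alpha> v
    using that by (rule mono_step_in_J)
qed (simp_all add: mono_step_def var_act_def[abs_def])

lemma fold_mono_step_in_J: "finite A \<Longrightarrow> w \<in> J \<Longrightarrow> Finite_Set.fold (mono_step m) w A \<in> J"
  by (induct A rule: finite_induct) (auto simp: fold_mono_step_insert mono_step_in_J)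

lemma fold_mono_step_add:
  "finite A \<Longrightarrow> x \<in> J \<Longrightarrow> y \<in> J \<Longrightarrow>
    Finite_Set.fold (mono_step m) (x + y) A
      = Finite_Set.fold (mono_step m) x A + Finite_Set.fold (mono_step m) y A"
  by (induct A rule: finite_induct)
    (auto simp: fold_mono_step_insert mono_step_def fold_mono_step_in_J
      subspace_add[OF subspace_J] var_act_pow_add)

lemma fold_mono_step_scale:
  "finite A \<Longrightarrow> x \<in> J \<Longrightarrow>
    Finite_Set.fold (mono_step m) (sc c x) A = sc c (Finite_Set.fold (mono_step m) x A)"
  by (induct A rule: finite_induct)
    (auto simp: fold_mono_step_insert mono_step_def fold_mono_step_in_J
      subspace_scale[OF subspace_J] var_act_pow_scale)

lemma var_act_fold_mono_step:
  "finite A \<Longrightarrow> x \<in> J \<Longrightarrow>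
    var_act \<gamma> (Finite_Set.fold (mono_step m) x A) = Finite_Set.fold (mono_step m) (var_act \<gamma> x) A"
  by (induct A rule: finite_induct)
    (auto simp: fold_mono_step_insert mono_step_def fold_mono_step_in_J var_act_in_J
      var_act_pow_commute)

lemma mono_act_in_J: "w \<in> J \<Longrightarrow> mono_act br a m w \<in> J"
  by (simp add: mono_act_eq_fold fold_mono_step_in_J)

lemma mono_act_add:
  "x \<in> J \<Longrightarrow> y \<in> J \<Longrightarrow> mono_act br a m (x + y) = mono_act br a m x + mono_act br a m y"
  by (simp add: mono_act_eq_fold fold_mono_step_add subspace_add[OF subspace_J])

lemma mono_act_scale: "x \<in> J \<Longrightarrow> mono_act br a m (sc c x) = sc c (mono_act br a m x)"
  by (simp add: mono_act_eq_fold fold_mono_step_scale subspace_scale[OF subspace_J])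

lemma var_act_mono_act:
  "x \<in> J \<Longrightarrow> var_act \<gamma> (mono_act br a m x) = mono_act br a m (var_act \<gamma> x)"
  by (simp add: mono_act_eq_fold var_act_fold_mono_step var_act_in_J)

lemma mono_act_zero_monomial [simp]: "mono_act br a 0 w = w"
  by (simp add: mono_act_def)

lemma mono_act_single_add:
  assumes w: "w \<in> J"
  shows "mono_act br a (Poly_Mapping.single \<alpha> 1 + m) w = var_act \<alpha> (mono_act br a m w)"
proof -
  define m' where "m' = Poly_Mapping.single \<alpha> 1 + m"
  define A where "A = Poly_Mapping.keys m - {\<alpha>}"
  have lookup_m': "Poly_Mapping.lookup m' k =
      (if k = \<alpha> then Suc (Poly_Mapping.lookup m k) else Poly_Mapping.lookup m k)" for k
    by (simp add: m'_def lookup_add lookup_single when_def)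
  have keys_m': "Poly_Mapping.keys m' = insert \<alpha> A"
    by (auto simp: A_def in_keys_iff lookup_m' split: if_splits)
  have A: "finite A" "\<alpha> \<notin> A"
    by (simp_all add: A_def)
  define v where "v = Finite_Set.fold (mono_step m) w A"
  have v: "v \<in> J"
    using fold_mono_step_in_J[OF A(1) w] by (simp add: v_def)
  have "Finite_Set.fold (mono_step m') w A = v"
    unfolding v_def
    by (rule Finite_Set.fold_cong[OF comp_fun_commute_on_mono_step comp_fun_commute_on_mono_step _ A(1)])
      (auto simp: mono_step_def lookup_m' A(2) fun_eq_iff)
  then have m': "mono_act br a m' w = mono_step m' \<alpha> v"
    using mono_act_eq_fold[OF w, of m'] keys_m' fold_mono_step_insert[OF A, of m' w] by simp
  have m: "mono_act br a m w = mono_step m \<alpha> v"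
  proof (cases "\<alpha> \<in> Poly_Mapping.keys m")
    case True
    then have "Poly_Mapping.keys m = insert \<alpha> A"
      by (auto simp: A_def)
    then show ?thesis
      using mono_act_eq_fold[OF w, of m] fold_mono_step_insert[OF A, of m w] by (simp add: v_def)
  next
    case False
    then have "Poly_Mapping.keys m = A" "Poly_Mapping.lookup m \<alpha> = 0"
      by (auto simp: A_def in_keys_iff)
    then show ?thesis
      using mono_act_eq_fold[OF w, of m] v by (simp add: v_def mono_step_def)
  qed
  show ?thesis
    unfolding m'_def[symmetric] m' m using v var_act_pow_in_J[OF v]
    by (simp add: mono_step_def lookup_m')
qed

abbreviation act :: "'v \<Rightarrow> (('l \<Rightarrow>\<^sub>0 nat) \<Rightarrow>\<^sub>0 'k) \<Rightarrow> 'v" where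
  "act w p \<equiv> poly_act sc br a w p"

lemma poly_act_superset_keys:
  "finite S \<Longrightarrow> Poly_Mapping.keys p \<subseteq> S \<Longrightarrow>
    act w p = (\<Sum>m\<in>S. sc (Poly_Mapping.lookup p m) (mono_act br a m w))"
  unfolding poly_act_def by (rule sum.mono_neutral_left) (auto simp: in_keys_iff)

lemma poly_act_add: "act w (p + p') = act w p + act w p'"
proof -
  let ?S = "Poly_Mapping.keys p \<union> Poly_Mapping.keys p'"
  show ?thesis
    using poly_act_superset_keys[of ?S "p + p'" w] poly_act_superset_keys[of ?S p w]
      poly_act_superset_keys[of ?S p' w] keys_add[of p p']
    by (simp add: lookup_add scale_left_distrib sum.distrib)
qed

lemma poly_act_zero [simp]: "act w 0 = 0"
  by (simp add: poly_act_def)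

lemma poly_act_sum: "act w (sum g I) = (\<Sum>i\<in>I. act w (g i))"
  by (induct I rule: infinite_finite_induct) (auto simp: poly_act_add)

lemma poly_act_single: "act w (Poly_Mapping.single m c) = sc c (mono_act br a m w)"
  by (cases "c = 0") (simp_all add: poly_act_def)

lemma poly_act_one [simp]: "act w 1 = w"
  by (simp add: poly_act_def)

lemma poly_act_in_J: "w \<in> J \<Longrightarrow> act w p \<in> J"
  unfolding poly_act_def
  by (intro subspace_sum[OF subspace_J] subspace_scale[OF subspace_J] mono_act_in_J)

lemma poly_act_add_vec: "x \<in> J \<Longrightarrow> y \<in> J \<Longrightarrow> act (x + y) p = act x p + act y p"
  unfolding poly_act_def by (simp add: mono_act_add scale_right_distrib sum.distrib)

lemma poly_act_scale_vec: "x \<in> J \<Longrightarrow> act (sc c x) p = sc c (act x p)"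
  unfolding poly_act_def
  by (simp add: mono_act_scale scale_left_commute scale_sum_right mult.commute)

lemma poly_act_zero_vec [simp]: "act 0 p = 0"
  using poly_act_scale_vec[OF subspace_0[OF subspace_J], of 0] by simp

lemma poly_act_diff_vec: "x \<in> J \<Longrightarrow> y \<in> J \<Longrightarrow> act (x - y) p = act x p - act y p"
  using poly_act_add_vec[of "x - y" y p] subspace_diff[OF subspace_J, of x y]
  by (simp add: algebra_simps)

lemma var_act_poly_act: "w \<in> J \<Longrightarrow> var_act \<gamma> (act w p) = act (var_act \<gamma> w) p"
  unfolding poly_act_def by (simp add: var_act_sum var_act_scale var_act_mono_act)

lemma poly_act_pvar_mult:
  assumes w: "w \<in> J"
  shows "act w (pvar \<alpha> * p) = act (var_act \<alpha> w) p"
proof -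
  have "pvar \<alpha> * p = (\<Sum>m\<in>Poly_Mapping.keys p. pvar \<alpha> * Poly_Mapping.single m (Poly_Mapping.lookup p m))"
    by (subst poly_mapping_sum_single[of p, symmetric]) (simp add: sum_distrib_left)
  also have "\<dots> = (\<Sum>m\<in>Poly_Mapping.keys p.
      Poly_Mapping.single (Poly_Mapping.single \<alpha> 1 + m) (Poly_Mapping.lookup p m))"
    by (simp add: pvar_def mult_single)
  finally have "act w (pvar \<alpha> * p) = (\<Sum>m\<in>Poly_Mapping.keys p.
      sc (Poly_Mapping.lookup p m) (mono_act br a (Poly_Mapping.single \<alpha> 1 + m) w))"
    by (simp add: poly_act_sum poly_act_single)
  also have "\<dots> = act (var_act \<alpha> w) p"
    by (simp add: poly_act_def mono_act_single_add[OF w, simplified] var_act_mono_act[OF w])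
  finally show ?thesis .
qed

end

locale quotient_basis = abelian_ideal_over_derived sc br J a
  for sc :: "'k::field \<Rightarrow> 'v::ab_group_add \<Rightarrow> 'v" and br J and a :: "'l \<Rightarrow> 'v" +
  assumes basis: "basis_mod sc J a"
begin

definition lincomb :: "'l set \<Rightarrow> ('l \<Rightarrow> 'k) \<Rightarrow> ('l \<Rightarrow> 'v) \<Rightarrow> 'v" where
  "lincomb K d x = (\<Sum>\<alpha>\<in>K. sc (d \<alpha>) (x \<alpha>))"

lemma lincomb_in_J_imp_zero: "finite K \<Longrightarrow> lincomb K d a \<in> J \<Longrightarrow> \<alpha> \<in> K \<Longrightarrow> d \<alpha> = 0"
  using basis unfolding basis_mod_def lincomb_def by blast

lemma obtain_decomposition:
  obtains K d where "finite K" "v - lincomb K d a \<in> J"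
  using basis unfolding basis_mod_def lincomb_def by blast

lemma lincomb_restrict:
  "finite H \<Longrightarrow> K \<subseteq> H \<Longrightarrow> lincomb H (\<lambda>\<alpha>. if \<alpha> \<in> K then d \<alpha> else 0) x = lincomb K d x"
  unfolding lincomb_def by (rule sum.mono_neutral_cong_right) simp_all

lemma lincomb_add:
  assumes "finite K" "finite K'"
  obtains H e where "finite H" "\<And>x. lincomb H e x = lincomb K d x + lincomb K' d' x"
proof
  let ?e = "\<lambda>\<alpha>. (if \<alpha> \<in> K then d \<alpha> else 0) + (if \<alpha> \<in> K' then d' \<alpha> else 0)"
  show "finite (K \<union> K')"
    using assms by simp
  show "lincomb (K \<union> K') ?e x = lincomb K d x + lincomb K' d' x" for x
    using lincomb_restrict[of "K \<union> K'" K d x] lincomb_restrict[of "K \<union> K'" K' d' x] assms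
    by (simp add: lincomb_def scale_left_distrib sum.distrib)
qed

lemma lincomb_diff: "lincomb K d (\<lambda>\<alpha>. x \<alpha> - y \<alpha>) = lincomb K d x - lincomb K d y"
  by (simp add: lincomb_def scale_right_diff_distrib sum_subtractf)

lemma lincomb_in_J: "(\<And>\<alpha>. \<alpha> \<in> K \<Longrightarrow> x \<alpha> \<in> J) \<Longrightarrow> lincomb K d x \<in> J"
  unfolding lincomb_def by (intro subspace_sum[OF subspace_J] subspace_scale[OF subspace_J])

lemma lincomb_scale: "lincomb K (\<lambda>\<alpha>. r * d \<alpha>) x = sc r (lincomb K d x)"
  by (simp add: lincomb_def scale_sum_right)

lemma lincomb_congruent:
  assumes "finite K" "finite K'" "lincomb K d a - lincomb K' d' a \<in> J"
  shows "lincomb K d x = lincomb K' d' x"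
proof -
  obtain H e where H: "finite H" "\<And>x. lincomb H e x = lincomb K d x + lincomb K' (\<lambda>\<alpha>. - d' \<alpha>) x"
    using lincomb_add[OF assms(1,2)] by blast
  have neg: "lincomb K' (\<lambda>\<alpha>. - d' \<alpha>) y = - lincomb K' d' y" for y
    using lincomb_scale[of K' "- 1" d' y] by simp
  have "lincomb H e a \<in> J"
    using assms(3) by (simp add: H(2) neg)
  then have "\<forall>\<alpha>\<in>H. e \<alpha> = 0"
    using lincomb_in_J_imp_zero[OF H(1)] by blast
  then have "lincomb H e x = 0"
    by (simp add: lincomb_def)
  then show ?thesis
    by (simp add: H(2) neg)
qed

text \<open>The linear map that sends a_\<alpha> to g \<alpha> and agrees with \<psi> on J; well defined because the
  a_\<alpha> are a basis modulo J.\<close>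
definition extend :: "('l \<Rightarrow> 'v) \<Rightarrow> ('v \<Rightarrow> 'v) \<Rightarrow> 'v \<Rightarrow> 'v" where
  "extend g \<psi> v = (case SOME (K, d). finite K \<and> v - lincomb K d a \<in> J of
     (K, d) \<Rightarrow> lincomb K d g + \<psi> (v - lincomb K d a))"

lemma extend_eq:
  assumes "finite K" "v - lincomb K d a \<in> J"
  shows "extend g \<psi> v = lincomb K d g + \<psi> (v - lincomb K d a)"
proof -
  obtain K0 d0 where K0: "finite K0" "v - lincomb K0 d0 a \<in> J"
    by (rule obtain_decomposition)
  obtain K' d' where rep: "(SOME (K, d). finite K \<and> v - lincomb K d a \<in> J) = (K', d')"
    by fastforce
  have "finite K' \<and> v - lincomb K' d' a \<in> J"
    using someI[of "\<lambda>(K, d). finite K \<and> v - lincomb K d a \<in> J" "(K0, d0)"] K0 rep by simp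
  moreover from this have "(v - lincomb K d a) - (v - lincomb K' d' a) \<in> J"
    using subspace_diff[OF subspace_J assms(2)] by blast
  then have "lincomb K' d' a - lincomb K d a \<in> J"
    by simp
  ultimately have "lincomb K' d' x = lincomb K d x" for x
    using lincomb_congruent assms(1) by blast
  then show ?thesis
    unfolding extend_def rep by simp
qed

lemma extend_on_J: "u \<in> J \<Longrightarrow> extend g \<psi> u = \<psi> u"
  using extend_eq[of "{}" u] by (simp add: lincomb_def)

lemma extend_basis: "extend g \<psi> (a \<alpha>) = g \<alpha> + \<psi> 0"
  using extend_eq[of "{\<alpha>}" "a \<alpha>" "\<lambda>_. 1"] subspace_0[OF subspace_J] by (simp add: lincomb_def)

context
  fixes \<psi> :: "'v \<Rightarrow> 'v"
  assumes \<psi>_add: "\<And>x y. x \<in> J \<Longrightarrow> y \<in> J \<Longrightarrow> \<psi> (x + y) = \<psi> x + \<psi> y"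
    and \<psi>_scale: "\<And>c x. x \<in> J \<Longrightarrow> \<psi> (sc c x) = sc c (\<psi> x)"
begin

lemma linear_extend: "Vector_Spaces.linear sc sc (extend g \<psi>)"
proof unfold_locales
  fix x y
  obtain K1 d1 where x: "finite K1" "x - lincomb K1 d1 a \<in> J"
    by (rule obtain_decomposition)
  obtain K2 d2 where y: "finite K2" "y - lincomb K2 d2 a \<in> J"
    by (rule obtain_decomposition)
  obtain K d where K: "finite K" "\<And>z. lincomb K d z = lincomb K1 d1 z + lincomb K2 d2 z"
    using lincomb_add[OF x(1) y(1), of d1 d2] by blast
  have split: "x + y - lincomb K d a = (x - lincomb K1 d1 a) + (y - lincomb K2 d2 a)"
    by (simp add: K(2) algebra_simps)
  have "extend g \<psi> (x + y) = lincomb K d g + \<psi> ((x - lincomb K1 d1 a) + (y - lincomb K2 d2 a))"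
    using extend_eq[OF K(1), of "x + y" d] subspace_add[OF subspace_J x(2) y(2)]
    by (simp only: split)
  also have "\<dots> = extend g \<psi> x + extend g \<psi> y"
    using extend_eq[OF x] extend_eq[OF y] by (simp add: \<psi>_add[OF x(2) y(2)] K(2) add_ac)
  finally show "extend g \<psi> (x + y) = extend g \<psi> x + extend g \<psi> y" .
next
  fix r x
  obtain K d where x: "finite K" "x - lincomb K d a \<in> J"
    by (rule obtain_decomposition)
  have split: "sc r x - lincomb K (\<lambda>\<alpha>. r * d \<alpha>) a = sc r (x - lincomb K d a)"
    by (simp add: lincomb_scale scale_right_diff_distrib)
  have "extend g \<psi> (sc r x) = lincomb K (\<lambda>\<alpha>. r * d \<alpha>) g + \<psi> (sc r (x - lincomb K d a))"
    using extend_eq[OF x(1), of "sc r x" "\<lambda>\<alpha>. r * d \<alpha>"] subspace_scale[OF subspace_J x(2)]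
    by (simp only: split)
  also have "\<dots> = sc r (extend g \<psi> x)"
    using extend_eq[OF x] by (simp add: \<psi>_scale[OF x(2)] lincomb_scale scale_right_distrib)
  finally show "extend g \<psi> (sc r x) = sc r (extend g \<psi> x)" .
qed

lemma inj_extend:
  assumes g: "\<And>\<alpha>. g \<alpha> - a \<alpha> \<in> J"
    and \<psi>_J: "\<And>u. u \<in> J \<Longrightarrow> \<psi> u \<in> J"
    and \<psi>_inj: "\<And>u. u \<in> J \<Longrightarrow> \<psi> u = 0 \<Longrightarrow> u = 0"
  shows "inj (extend g \<psi>)"
proof -
  interpret extend: Vector_Spaces.linear sc sc "extend g \<psi>"
    by (rule linear_extend)
  have zero: "v = 0" if v: "extend g \<psi> v = 0" for v
  proof -
    obtain K d where K: "finite K" "v - lincomb K d a \<in> J"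
      by (rule obtain_decomposition)
    have "lincomb K d (\<lambda>\<alpha>. g \<alpha> - a \<alpha>) + \<psi> (v - lincomb K d a)
        = (lincomb K d g + \<psi> (v - lincomb K d a)) - lincomb K d a"
      by (simp add: lincomb_diff algebra_simps)
    also have "\<dots> = - lincomb K d a"
      using v extend_eq[OF K] by simp
    finally have "- lincomb K d a \<in> J"
      using subspace_add[OF subspace_J lincomb_in_J \<psi>_J[OF K(2)]] g by metis
    then have "lincomb K d a \<in> J"
      using subspace_neg[OF subspace_J] by force
    then have "\<forall>\<alpha>\<in>K. d \<alpha> = 0"
      using lincomb_in_J_imp_zero[OF K(1)] by blast
    then have "lincomb K d a = 0"
      by (simp add: lincomb_def)
    then have "v \<in> J"
      using K(2) by simp
    moreover from this have "\<psi> v = 0"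
      using v by (simp add: extend_on_J)
    ultimately show "v = 0"
      by (rule \<psi>_inj)
  qed
  show ?thesis
  proof (rule injI)
    fix x y
    assume "extend g \<psi> x = extend g \<psi> y"
    then have "extend g \<psi> (x - y) = 0"
      by (simp add: extend.diff)
    then have "x - y = 0"
      by (rule zero)
    then show "x = y"
      by simp
  qed
qed

end

lemma lie_hom_of_generators:
  assumes lin: "Vector_Spaces.linear sc sc \<phi>"
    and aa: "\<And>\<alpha> \<gamma>. \<phi> (br (a \<alpha>) (a \<gamma>)) = br (\<phi> (a \<alpha>)) (\<phi> (a \<gamma>))"
    and Ja: "\<And>u \<gamma>. u \<in> J \<Longrightarrow> \<phi> (br u (a \<gamma>)) = br (\<phi> u) (\<phi> (a \<gamma>))"
    and JJ: "\<And>u w. u \<in> J \<Longrightarrow> w \<in> J \<Longrightarrow> \<phi> (br u w) = br (\<phi> u) (\<phi> w)"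
  shows "lie_hom sc br \<phi>"
proof -
  interpret \<phi>: Vector_Spaces.linear sc sc \<phi>
    by (rule lin)
  define P where "P x y \<longleftrightarrow> \<phi> (br x y) = br (\<phi> x) (\<phi> y)" for x y
  have sym: "P y x" if "P x y" for x y
    using that unfolding P_def by (metis bracket_anticomm \<phi>.neg)
  have lincomb: "P (lincomb K d a) y" if "finite K" "\<And>\<alpha>. P (a \<alpha>) y" for K d y
    using that unfolding lincomb_def
    by (induct K rule: finite_induct)
      (auto simp: P_def \<phi>.add \<phi>.scale bracket_add_left bracket_scale_left)
  have decompose: "P x y" if "\<And>\<alpha>. P (a \<alpha>) y" "\<And>u. u \<in> J \<Longrightarrow> P u y" for x y
  proof -
    obtain K d where K: "finite K" "x - lincomb K d a \<in> J"
      by (rule obtain_decomposition)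
    have "P (lincomb K d a + (x - lincomb K d a)) y"
      using lincomb[OF K(1) that(1)] that(2)[OF K(2)] unfolding P_def
      by (simp only: \<phi>.add bracket_add_left)
    then show ?thesis
      by simp
  qed
  have basis_left: "P (a \<alpha>) y" for \<alpha> y
    by (rule sym, rule decompose) (auto simp: P_def aa Ja)
  have J_left: "P u y" if "u \<in> J" for u y
    by (rule sym, rule decompose) (auto simp: P_def JJ Ja that basis_left[unfolded P_def])
  show ?thesis
    unfolding lie_hom_def using lin decompose[OF basis_left J_left] by (auto simp: P_def)
qed

end

lemma (in lie_alg) abelian_ideal_over_derived_derived:
  assumes "metabelian br"
  shows "abelian_ideal_over_derived sc br (derived sc br)"
  using derived_abelian[OF assms]
  by unfold_locales (auto simp: subspace_derived bracket_in_derived abelian_set_def)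

lemma (in lie_alg) abelian_ideal_over_derived_fitting:
  assumes "metabelian br" "abelian_set br (fitting sc br)"
  shows "abelian_ideal_over_derived sc br (fitting sc br)"
  using assms(2) derived_subset_fitting[OF assms(1)] bracket_in_derived
  by unfold_locales (auto simp: subspace_fitting abelian_set_def)

locale twisting = quotient_basis sc br J a
  for sc :: "'k::field \<Rightarrow> 'v::ab_group_add \<Rightarrow> 'v" and br J and a :: "'l \<Rightarrow> 'v" +
  fixes q :: nat and j :: "nat \<Rightarrow> 'l" and fs :: "nat \<Rightarrow> ('l \<Rightarrow>\<^sub>0 nat) \<Rightarrow>\<^sub>0 'k"
begin

definition twist_poly :: "('l \<Rightarrow>\<^sub>0 nat) \<Rightarrow>\<^sub>0 'k" where
  "twist_poly = (\<Sum>i<q. pvar (j i) * fs i)"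

definition h :: "'l \<Rightarrow> 'v" where
  "h \<alpha> = (\<Sum>i<q. act (br (a \<alpha>) (a (j i))) (fs i))"

definition phi :: "'v \<Rightarrow> 'v" where
  "phi = extend (\<lambda>\<alpha>. a \<alpha> + h \<alpha>) (\<lambda>u. act u (1 + twist_poly))"

lemma act_one_plus_twist_poly:
  "u \<in> J \<Longrightarrow> act u (1 + twist_poly) = u + (\<Sum>i<q. act (var_act (j i) u) (fs i))"
  by (simp add: twist_poly_def poly_act_add poly_act_sum poly_act_pvar_mult)

lemma h_in_J: "h \<alpha> \<in> J"
  unfolding h_def by (intro subspace_sum[OF subspace_J] poly_act_in_J bracket_in_J)

lemma var_act_h: "var_act \<gamma> (h \<alpha>) = (\<Sum>i<q. act (var_act \<gamma> (br (a \<alpha>) (a (j i)))) (fs i))"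
  unfolding h_def by (simp add: var_act_sum var_act_poly_act bracket_in_J)

lemma linear_phi: "Vector_Spaces.linear sc sc phi"
  unfolding phi_def by (rule linear_extend) (simp_all add: poly_act_add_vec poly_act_scale_vec)

lemma phi_on_J: "u \<in> J \<Longrightarrow> phi u = act u (1 + twist_poly)"
  by (simp add: phi_def extend_on_J)

lemma phi_basis: "phi (a \<alpha>) = a \<alpha> + h \<alpha>"
  by (simp add: phi_def extend_basis)

lemma phi_bracket_J_J: "u \<in> J \<Longrightarrow> w \<in> J \<Longrightarrow> phi (br u w) = br (phi u) (phi w)"
  by (simp add: J_abelian phi_on_J poly_act_in_J subspace_0[OF subspace_J])

lemma phi_bracket_J_basis:
  assumes u: "u \<in> J"
  shows "phi (br u (a \<gamma>)) = br (phi u) (phi (a \<gamma>))"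
proof -
  have "phi (br u (a \<gamma>)) = var_act \<gamma> (act u (1 + twist_poly))"
    by (simp add: phi_on_J bracket_in_J var_act_poly_act[OF u, unfolded var_act_def] var_act_def)
  also have "\<dots> = br (phi u) (a \<gamma> + h \<gamma>)"
    by (simp add: var_act_def phi_on_J u bracket_add_right J_abelian[OF poly_act_in_J[OF u] h_in_J])
  finally show ?thesis
    by (simp add: phi_basis)
qed

lemma phi_bracket_basis_basis: "phi (br (a \<alpha>) (a \<gamma>)) = br (phi (a \<alpha>)) (phi (a \<gamma>))"
proof -
  let ?w = "br (a \<alpha>) (a \<gamma>)"
  have "var_act (j i) ?w = var_act \<gamma> (br (a \<alpha>) (a (j i))) - var_act \<alpha> (br (a \<gamma>) (a (j i)))" for i
    unfolding var_act_def by (rule bracket_derivation)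
  then have "(\<Sum>i<q. act (var_act (j i) ?w) (fs i)) = var_act \<gamma> (h \<alpha>) - var_act \<alpha> (h \<gamma>)"
    by (simp add: var_act_h poly_act_diff_vec var_act_in_J sum_subtractf)
  then have "phi ?w = ?w + br (h \<alpha>) (a \<gamma>) - br (h \<gamma>) (a \<alpha>)"
    by (simp add: phi_on_J bracket_in_J act_one_plus_twist_poly var_act_def)
  also have "\<dots> = br (a \<alpha> + h \<alpha>) (a \<gamma> + h \<gamma>)"
    using bracket_anticomm[of "h \<gamma>" "a \<alpha>"]
    by (simp add: bracket_add_left bracket_add_right J_abelian h_in_J algebra_simps)
  finally show ?thesis
    by (simp add: phi_basis)
qed

lemma lie_hom_phi: "lie_hom sc br phi"
  using linear_phi phi_bracket_basis_basis phi_bracket_J_basis phi_bracket_J_J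
  by (rule lie_hom_of_generators)

lemma inj_phi:
  assumes "torsion_free sc br a J" "Poly_Mapping.lookup twist_poly 0 = 0"
  shows "inj phi"
  unfolding phi_def
proof (rule inj_extend)
  have "Poly_Mapping.lookup (1 + twist_poly) 0 = 1"
    using assms(2) by (simp add: lookup_add)
  then have "1 + twist_poly \<noteq> 0"
    by (metis lookup_zero zero_neq_one)
  then show "u = 0" if "u \<in> J" "act u (1 + twist_poly) = 0" for u
    using assms(1) that unfolding torsion_free_def by fastforce
qed (simp_all add: poly_act_add_vec poly_act_scale_vec poly_act_in_J h_in_J)

end

theorem proposition2p2p4:
  fixes sc :: "'k::field \<Rightarrow> 'v::ab_group_add \<Rightarrow> 'v"
    and br :: "'v \<Rightarrow> 'v \<Rightarrow> 'v"
    and J :: "'v set"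
    and a :: "'l \<Rightarrow> 'v"
    and b :: "'b \<Rightarrow> 'v"
    and f :: "('l \<Rightarrow>\<^sub>0 nat) \<Rightarrow>\<^sub>0 'k"
    and q :: nat and j :: "nat \<Rightarrow> 'l" and fs :: "nat \<Rightarrow> ('l \<Rightarrow>\<^sub>0 nat) \<Rightarrow>\<^sub>0 'k"
  assumes "lie_algebra sc br"
    and "metabelian br"
    and "J = derived sc br \<or> (J = fitting sc br \<and> abelian_set br (fitting sc br))"
    and "basis_mod sc J a"
    and "generates_module sc br a J b"
    and "Poly_Mapping.lookup f 0 = 0"
    and "f = (\<Sum>i<q. pvar (j i) * fs i)"
  shows "\<exists>\<phi>. lie_hom sc br \<phi>
           \<and> (\<forall>\<beta>. \<phi> (b \<beta>) = poly_act sc br a (b \<beta>) (1 + f))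
           \<and> (\<forall>\<alpha>. \<phi> (a \<alpha>) = a \<alpha> + (\<Sum>i<q. poly_act sc br a (br (a \<alpha>) (a (j i))) (fs i)))
           \<and> (torsion_free sc br a J \<longrightarrow> inj \<phi>)"
proof -
  interpret lie_alg sc br
    by unfold_locales (fact assms(1))
  have "abelian_ideal_over_derived sc br J"
    using assms(2,3) abelian_ideal_over_derived_derived abelian_ideal_over_derived_fitting by blast
  then interpret twisting sc br J a q j fs
    by (simp add: twisting_def quotient_basis_def quotient_basis_axioms_def assms(4))
  have f: "f = twist_poly"
    by (simp add: twist_poly_def assms(7))
  have b: "b \<beta> \<in> J" for \<beta>
    using assms(5) unfolding generates_module_def by blast
  show ?thesis
    using lie_hom_phi phi_on_J[OF b] phi_basis inj_phi assms(6)
    by (auto simp: f h_def)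
qed

end
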